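(* Let $\mathbf{C}$ be a small 2-category and let $\mathbf{D}$ be a 2-category equipped with an enhanced factorization system $(\mathcal{E},\mathcal{M})$. Let $F,G\colon \mathbf{C}\to\mathbf{D}$ be 2-functors and $\alpha\colon F\Rightarrow G$ a 2-natural transformation (a 1-cell of $\mathbf{D}^{\mathbf{C}}$). Then there exist a 2-functor $I\colon\mathbf{C}\to\mathbf{D}$ and 2-natural transformations $\varepsilon\colon F\Rightarrow I$, $\mu\colon I\Rightarrow G$ with $\alpha=\mu\circ\varepsilon$, such that for every object $c\in\mathbf{C}$ the component $\varepsilon_c$ lies in $\mathcal{E}$ and the component $\mu_c$ lies in $\mathcal{M}$.
   Context: For a 2-category $\mathbf{A}$, an enhanced factorization system on $\mathbf{A}$ is a pair $(\mathcal{E},\mathcal{M})$ of classes of 1-cells of $\mathbf{A}$, each containing all isomorphisms, such that: (i) every 1-cell $\alpha$ factors (not necessarily uniquely) as $\alpha=\mu\circ\varepsilon$ with $\varepsilon\in\mathcal{E}$, $\mu\in\mathcal{M}$; (ii) given $\varepsilon\colon F\to F'$ in $\mathcal{E}$, $\mu\colon G\to G'$ in $\mathcal{M}$, 1-cells $\alpha\colon F\to G$, $\alpha'\colon F'\to G'$ and an invertible 2-cell $\Psi\colon \alpha'\varepsilon\Rightarrow\mu\alpha$, there is a unique pair $(\delta,\widetilde\Psi)$ with $\delta\colon F'\to G$ a 1-cell and $\widetilde\Psi\colon\alpha'\Rightarrow\mu\delta$ an invertible 2-cell such that $\delta\varepsilon=\alpha$ and the whiskering $\widetilde\Psi\varepsilon=\Psi$;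 moreover if $\Psi$ is an identity then $\mu\delta=\alpha'$ and $\widetilde\Psi$ is an identity; (iii) given $\varepsilon\colon F\to F'$ in $\mathcal{E}$, $\mu\colon G\to G'$ in $\mathcal{M}$, parallel 1-cells $\alpha_1,\alpha_2\colon F\to G$ and $\alpha_1',\alpha_2'\colon F'\to G'$ with $\alpha_i'\varepsilon=\mu\alpha_i$ ($i=1,2$), and 2-cells $\Phi\colon\alpha_1\Rightarrow\alpha_2$, $\Phi'\colon\alpha_1'\Rightarrow\alpha_2'$ with $\mu\Phi=\Phi'\varepsilon$, let $\delta_i\colon F'\to G$ be the unique 1-cells with $\delta_i\varepsilon=\alpha_i$ and $\mu\delta_i=\alpha_i'$ (from (ii) with identity 2-cell); then there is a unique 2-cell $\Delta\colon\delta_1\Rightarrow\delta_2$ with $\Delta\varepsilon=\Phi$ and $\mu\Delta=\Phi'$. $\mathbf{D}^{\mathbf{C}}$ denotes the 2-category of 2-functors $\mathbf{C}\to\mathbf{D}$, 2-natural transformations, and modifications. *)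

theory Defs
  imports Main
begin

text \<open>Strict 2-categories, presented with explicit sets of objects, 1-cells and 2-cells.
  obj: objects; arr: 1-cells; cell: 2-cells.
  dm/cd: domain/codomain of a 1-cell; cmp g f: composite g after f; idn x: identity 1-cell.
  s2/t2: source/target 1-cell of a 2-cell; vc b a: vertical composite (b after a);
  id2 f: identity 2-cell; hc b a: horizontal composite (b after a).\<close>

record ('o, 'a, 'b) cat2 =
  obj :: "'o set"
  arr :: "'a set"
  cell :: "'b set"
  dm :: "'a \<Rightarrow> 'o"
  cd :: "'a \<Rightarrow> 'o"
  cmp :: "'a \<Rightarrow> 'a \<Rightarrow> 'a"
  idn :: "'o \<Rightarrow> 'a"
  s2 :: "'b \<Rightarrow> 'a"
  t2 :: "'b \<Rightarrow> 'a"
  vc :: "'b \<Rightarrow> 'b \<Rightarrow> 'b"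
  id2 :: "'a \<Rightarrow> 'b"
  hc :: "'b \<Rightarrow> 'b \<Rightarrow> 'b"

definition two_category :: "('o, 'a, 'b) cat2 \<Rightarrow> bool" where
  "two_category C \<longleftrightarrow>
    \<comment> \<open>underlying 1-category\<close>
    (\<forall>f\<in>arr C. dm C f \<in> obj C \<and> cd C f \<in> obj C) \<and>
    (\<forall>x\<in>obj C. idn C x \<in> arr C \<and> dm C (idn C x) = x \<and> cd C (idn C x) = x) \<and>
    (\<forall>f\<in>arr C. \<forall>g\<in>arr C. cd C f = dm C g \<longrightarrow>
        cmp C g f \<in> arr C \<and> dm C (cmp C g f) = dm C f \<and> cd C (cmp C g f) = cd C g) \<and>
    (\<forall>f\<in>arr C. cmp C f (idn C (dm C f)) = f \<and> cmp C (idn C (cd C f)) f = f) \<and>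
    (\<forall>f\<in>arr C. \<forall>g\<in>arr C. \<forall>h\<in>arr C. cd C f = dm C g \<longrightarrow> cd C g = dm C h \<longrightarrow>
        cmp C h (cmp C g f) = cmp C (cmp C h g) f) \<and>
    \<comment> \<open>2-cells and vertical composition\<close>
    (\<forall>\<theta>\<in>cell C. s2 C \<theta> \<in> arr C \<and> t2 C \<theta> \<in> arr C \<and>
        dm C (s2 C \<theta>) = dm C (t2 C \<theta>) \<and> cd C (s2 C \<theta>) = cd C (t2 C \<theta>)) \<and>
    (\<forall>f\<in>arr C. id2 C f \<in> cell C \<and> s2 C (id2 C f) = f \<and> t2 C (id2 C f) = f) \<and>
    (\<forall>\<theta>\<in>cell C. \<forall>\<phi>\<in>cell C. t2 C \<theta> = s2 C \<phi> \<longrightarrow>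
        vc C \<phi> \<theta> \<in> cell C \<and> s2 C (vc C \<phi> \<theta>) = s2 C \<theta> \<and> t2 C (vc C \<phi> \<theta>) = t2 C \<phi>) \<and>
    (\<forall>\<theta>\<in>cell C. vc C \<theta> (id2 C (s2 C \<theta>)) = \<theta> \<and> vc C (id2 C (t2 C \<theta>)) \<theta> = \<theta>) \<and>
    (\<forall>\<theta>\<in>cell C. \<forall>\<phi>\<in>cell C. \<forall>\<psi>\<in>cell C. t2 C \<theta> = s2 C \<phi> \<longrightarrow> t2 C \<phi> = s2 C \<psi> \<longrightarrow>
        vc C \<psi> (vc C \<phi> \<theta>) = vc C (vc C \<psi> \<phi>) \<theta>) \<and>
    \<comment> \<open>horizontal composition\<close>
    (\<forall>\<theta>\<in>cell C. \<forall>\<phi>\<in>cell C. cd C (s2 C \<theta>) = dm C (s2 C \<phi>) \<longrightarrow>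
        hc C \<phi> \<theta> \<in> cell C \<and> s2 C (hc C \<phi> \<theta>) = cmp C (s2 C \<phi>) (s2 C \<theta>) \<and>
        t2 C (hc C \<phi> \<theta>) = cmp C (t2 C \<phi>) (t2 C \<theta>)) \<and>
    (\<forall>f\<in>arr C. \<forall>g\<in>arr C. cd C f = dm C g \<longrightarrow>
        hc C (id2 C g) (id2 C f) = id2 C (cmp C g f)) \<and>
    (\<forall>\<theta>\<in>cell C. hc C \<theta> (id2 C (idn C (dm C (s2 C \<theta>)))) = \<theta> \<and>
        hc C (id2 C (idn C (cd C (s2 C \<theta>)))) \<theta> = \<theta>) \<and>
    (\<forall>\<theta>\<in>cell C. \<forall>\<phi>\<in>cell C. \<forall>\<psi>\<in>cell C.
        cd C (s2 C \<theta>) = dm C (s2 C \<phi>) \<longrightarrow> cd C (s2 C \<phi>) = dm C (s2 C \<psi>) \<longrightarrow>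
        hc C \<psi> (hc C \<phi> \<theta>) = hc C (hc C \<psi> \<phi>) \<theta>) \<and>
    \<comment> \<open>interchange law\<close>
    (\<forall>\<theta>1\<in>cell C. \<forall>\<theta>2\<in>cell C. \<forall>\<phi>1\<in>cell C. \<forall>\<phi>2\<in>cell C.
        t2 C \<theta>1 = s2 C \<theta>2 \<longrightarrow> t2 C \<phi>1 = s2 C \<phi>2 \<longrightarrow> cd C (s2 C \<theta>1) = dm C (s2 C \<phi>1) \<longrightarrow>
        vc C (hc C \<phi>2 \<theta>2) (hc C \<phi>1 \<theta>1) = hc C (vc C \<phi>2 \<phi>1) (vc C \<theta>2 \<theta>1))"

definition iso1 :: "('o, 'a, 'b) cat2 \<Rightarrow> 'a \<Rightarrow> bool" where
  "iso1 C f \<longleftrightarrow> f \<in> arr C \<and> (\<exists>g\<in>arr C. dm C g = cd C f \<and> cd C g = dm C f \<and>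
      cmp C g f = idn C (dm C f) \<and> cmp C f g = idn C (cd C f))"

definition inv2 :: "('o, 'a, 'b) cat2 \<Rightarrow> 'b \<Rightarrow> bool" where
  "inv2 C \<theta> \<longleftrightarrow> \<theta> \<in> cell C \<and> (\<exists>\<phi>\<in>cell C. s2 C \<phi> = t2 C \<theta> \<and> t2 C \<phi> = s2 C \<theta> \<and>
      vc C \<phi> \<theta> = id2 C (s2 C \<theta>) \<and> vc C \<theta> \<phi> = id2 C (t2 C \<theta>))"

definition hom1 :: "('o, 'a, 'b) cat2 \<Rightarrow> 'a \<Rightarrow> 'o \<Rightarrow> 'o \<Rightarrow> bool" where
  "hom1 C f x y \<longleftrightarrow> f \<in> arr C \<and> dm C f = x \<and> cd C f = y"

definition hom2 :: "('o, 'a, 'b) cat2 \<Rightarrow> 'b \<Rightarrow> 'a \<Rightarrow> 'a \<Rightarrow> bool" where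
  "hom2 C \<theta> f g \<longleftrightarrow> \<theta> \<in> cell C \<and> s2 C \<theta> = f \<and> t2 C \<theta> = g"

text \<open>Enhanced factorization system (E, M) on a 2-category D, conditions (i)-(iii).
  Whiskerings: \<mu>\<Phi> = hc (id2 \<mu>) \<Phi>,  \<Phi>\<epsilon> = hc \<Phi> (id2 \<epsilon>).\<close>

definition enhanced_factorization_system ::
  "('o, 'a, 'b) cat2 \<Rightarrow> 'a set \<Rightarrow> 'a set \<Rightarrow> bool" where
  "enhanced_factorization_system D E M \<longleftrightarrow>
    E \<subseteq> arr D \<and> M \<subseteq> arr D \<and>
    {f. iso1 D f} \<subseteq> E \<and> {f. iso1 D f} \<subseteq> M \<and>
    \<comment> \<open>(i)\<close>
    (\<forall>a\<in>arr D. \<exists>e\<in>E. \<exists>m\<in>M. cd D e = dm D m \<and> a = cmp D m e) \<and>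
    \<comment> \<open>(ii)\<close>
    (\<forall>e\<in>E. \<forall>m\<in>M. \<forall>a a' \<Psi>. \<forall>F F' G G'.
        hom1 D e F F' \<longrightarrow> hom1 D m G G' \<longrightarrow> hom1 D a F G \<longrightarrow> hom1 D a' F' G' \<longrightarrow>
        hom2 D \<Psi> (cmp D a' e) (cmp D m a) \<longrightarrow> inv2 D \<Psi> \<longrightarrow>
        (\<exists>!p. hom1 D (fst p) F' G \<and> hom2 D (snd p) a' (cmp D m (fst p)) \<and> inv2 D (snd p) \<and>
              cmp D (fst p) e = a \<and> hc D (snd p) (id2 D e) = \<Psi>) \<and>
        (\<Psi> = id2 D (cmp D a' e) \<longrightarrow>
          (\<forall>d \<Psi>'. hom1 D d F' G \<and> hom2 D \<Psi>' a' (cmp D m d) \<and> inv2 D \<Psi>' \<and>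
              cmp D d e = a \<and> hc D \<Psi>' (id2 D e) = \<Psi> \<longrightarrow>
              cmp D m d = a' \<and> \<Psi>' = id2 D a'))) \<and>
    \<comment> \<open>(iii)\<close>
    (\<forall>e\<in>E. \<forall>m\<in>M. \<forall>F F' G G' a1 a2 a1' a2' \<Phi> \<Phi>' d1 d2.
        hom1 D e F F' \<longrightarrow> hom1 D m G G' \<longrightarrow>
        hom1 D a1 F G \<longrightarrow> hom1 D a2 F G \<longrightarrow> hom1 D a1' F' G' \<longrightarrow> hom1 D a2' F' G' \<longrightarrow>
        cmp D a1' e = cmp D m a1 \<longrightarrow> cmp D a2' e = cmp D m a2 \<longrightarrow>
        hom2 D \<Phi> a1 a2 \<longrightarrow> hom2 D \<Phi>' a1' a2' \<longrightarrow>
        hc D (id2 D m) \<Phi> = hc D \<Phi>' (id2 D e) \<longrightarrow>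
        hom1 D d1 F' G \<longrightarrow> cmp D d1 e = a1 \<longrightarrow> cmp D m d1 = a1' \<longrightarrow>
        hom1 D d2 F' G \<longrightarrow> cmp D d2 e = a2 \<longrightarrow> cmp D m d2 = a2' \<longrightarrow>
        (\<exists>!\<Delta>. hom2 D \<Delta> d1 d2 \<and> hc D \<Delta> (id2 D e) = \<Phi> \<and> hc D (id2 D m) \<Delta> = \<Phi>'))"

record ('o, 'a, 'b, 'p, 'c, 'd) fun2 =
  fo :: "'o \<Rightarrow> 'p"
  fa :: "'a \<Rightarrow> 'c"
  fc :: "'b \<Rightarrow> 'd"

definition two_functor ::
  "('o, 'a, 'b) cat2 \<Rightarrow> ('p, 'c, 'd) cat2 \<Rightarrow> ('o, 'a, 'b, 'p, 'c, 'd) fun2 \<Rightarrow> bool" where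
  "two_functor C D F \<longleftrightarrow>
    (\<forall>x\<in>obj C. fo F x \<in> obj D) \<and>
    (\<forall>f\<in>arr C. fa F f \<in> arr D \<and> dm D (fa F f) = fo F (dm C f) \<and> cd D (fa F f) = fo F (cd C f)) \<and>
    (\<forall>\<theta>\<in>cell C. fc F \<theta> \<in> cell D \<and> s2 D (fc F \<theta>) = fa F (s2 C \<theta>) \<and> t2 D (fc F \<theta>) = fa F (t2 C \<theta>)) \<and>
    (\<forall>x\<in>obj C. fa F (idn C x) = idn D (fo F x)) \<and>
    (\<forall>f\<in>arr C. \<forall>g\<in>arr C. cd C f = dm C g \<longrightarrow> fa F (cmp C g f) = cmp D (fa F g) (fa F f)) \<and>
    (\<forall>f\<in>arr C. fc F (id2 C f) = id2 D (fa F f)) \<and>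
    (\<forall>\<theta>\<in>cell C. \<forall>\<phi>\<in>cell C. t2 C \<theta> = s2 C \<phi> \<longrightarrow> fc F (vc C \<phi> \<theta>) = vc D (fc F \<phi>) (fc F \<theta>)) \<and>
    (\<forall>\<theta>\<in>cell C. \<forall>\<phi>\<in>cell C. cd C (s2 C \<theta>) = dm C (s2 C \<phi>) \<longrightarrow>
        fc F (hc C \<phi> \<theta>) = hc D (fc F \<phi>) (fc F \<theta>))"

definition two_natural ::
  "('o, 'a, 'b) cat2 \<Rightarrow> ('p, 'c, 'd) cat2 \<Rightarrow> ('o, 'a, 'b, 'p, 'c, 'd) fun2 \<Rightarrow>
   ('o, 'a, 'b, 'p, 'c, 'd) fun2 \<Rightarrow> ('o \<Rightarrow> 'c) \<Rightarrow> bool" where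
  "two_natural C D F G \<eta> \<longleftrightarrow>
    (\<forall>x\<in>obj C. hom1 D (\<eta> x) (fo F x) (fo G x)) \<and>
    (\<forall>f\<in>arr C. cmp D (fa G f) (\<eta> (dm C f)) = cmp D (\<eta> (cd C f)) (fa F f)) \<and>
    (\<forall>\<theta>\<in>cell C. hc D (fc G \<theta>) (id2 D (\<eta> (dm C (s2 C \<theta>)))) =
                 hc D (id2 D (\<eta> (cd C (s2 C \<theta>)))) (fc F \<theta>))"

end

theory Submission
  imports Defs
begin

text \<open>Factor every component as \<open>\<alpha> c = \<mu> c \<circ> \<epsilon> c\<close> and let \<open>I c\<close> be the middle object.
  For a 1-cell \<open>f : c \<rightarrow> c'\<close> the naturality square of \<open>\<alpha>\<close> becomes a commuting square with
  \<open>\<epsilon> c\<close> on one side and \<open>\<mu> c'\<close> on the other; \<open>I f\<close> is its unique diagonal from (ii), and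
  \<open>I\<close> on 2-cells is the unique 2-cell provided by (iii). Functoriality of \<open>I\<close> and naturality
  of \<open>\<epsilon>\<close> and \<open>\<mu>\<close> then hold because both sides of each required equation are diagonals
  of the same square.\<close>

locale two_cat =
  fixes C :: "('o, 'a, 'b) cat2"
  assumes two_category: "two_category C"
begin

lemma arr_dm [simp]: "f \<in> arr C \<Longrightarrow> dm C f \<in> obj C"
  and arr_cd [simp]: "f \<in> arr C \<Longrightarrow> cd C f \<in> obj C"
  and idn_arr [simp]: "x \<in> obj C \<Longrightarrow> idn C x \<in> arr C"
  and dm_idn [simp]: "x \<in> obj C \<Longrightarrow> dm C (idn C x) = x"
  and cd_idn [simp]: "x \<in> obj C \<Longrightarrow> cd C (idn C x) = x"
  using two_category unfolding two_category_def by - (elim conjE, blast)+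

lemma cmp_arr [simp]: "f \<in> arr C \<Longrightarrow> g \<in> arr C \<Longrightarrow> cd C f = dm C g \<Longrightarrow> cmp C g f \<in> arr C"
  and dm_cmp [simp]: "f \<in> arr C \<Longrightarrow> g \<in> arr C \<Longrightarrow> cd C f = dm C g \<Longrightarrow> dm C (cmp C g f) = dm C f"
  and cd_cmp [simp]: "f \<in> arr C \<Longrightarrow> g \<in> arr C \<Longrightarrow> cd C f = dm C g \<Longrightarrow> cd C (cmp C g f) = cd C g"
  using two_category unfolding two_category_def by - (elim conjE, blast)+

lemma cmp_idn_right [simp]: "f \<in> arr C \<Longrightarrow> dm C f = x \<Longrightarrow> cmp C f (idn C x) = f"
  and cmp_idn_left [simp]: "f \<in> arr C \<Longrightarrow> cd C f = y \<Longrightarrow> cmp C (idn C y) f = f"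
  using two_category unfolding two_category_def by - (elim conjE, blast)+

lemma cmp_assoc:
  "\<lbrakk>f \<in> arr C; g \<in> arr C; h \<in> arr C; cd C f = dm C g; cd C g = dm C h\<rbrakk> \<Longrightarrow>
    cmp C h (cmp C g f) = cmp C (cmp C h g) f"
  using two_category unfolding two_category_def by (elim conjE) blast

lemma s2_arr [simp]: "t \<in> cell C \<Longrightarrow> s2 C t \<in> arr C"
  and t2_arr [simp]: "t \<in> cell C \<Longrightarrow> t2 C t \<in> arr C"
  and dm_t2 [simp]: "t \<in> cell C \<Longrightarrow> dm C (t2 C t) = dm C (s2 C t)"
  and cd_t2 [simp]: "t \<in> cell C \<Longrightarrow> cd C (t2 C t) = cd C (s2 C t)"
  using two_category unfolding two_category_def by - (elim conjE, metis)+

lemma id2_cell [simp]: "f \<in> arr C \<Longrightarrow> id2 C f \<in> cell C"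
  and s2_id2 [simp]: "f \<in> arr C \<Longrightarrow> s2 C (id2 C f) = f"
  and t2_id2 [simp]: "f \<in> arr C \<Longrightarrow> t2 C (id2 C f) = f"
  using two_category unfolding two_category_def by - (elim conjE, blast)+

lemma vc_cell [simp]: "t \<in> cell C \<Longrightarrow> p \<in> cell C \<Longrightarrow> t2 C t = s2 C p \<Longrightarrow> vc C p t \<in> cell C"
  and s2_vc [simp]: "t \<in> cell C \<Longrightarrow> p \<in> cell C \<Longrightarrow> t2 C t = s2 C p \<Longrightarrow> s2 C (vc C p t) = s2 C t"
  and t2_vc [simp]: "t \<in> cell C \<Longrightarrow> p \<in> cell C \<Longrightarrow> t2 C t = s2 C p \<Longrightarrow> t2 C (vc C p t) = t2 C p"
  using two_category unfolding two_category_def by - (elim conjE, blast)+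

lemma vc_id2_right: "t \<in> cell C \<Longrightarrow> vc C t (id2 C (s2 C t)) = t"
  using two_category unfolding two_category_def by (elim conjE) blast

lemma vc_id2_id2 [simp]: "f \<in> arr C \<Longrightarrow> vc C (id2 C f) (id2 C f) = id2 C f"
  using vc_id2_right[of "id2 C f"] by simp

lemma hc_cell [simp]: "t \<in> cell C \<Longrightarrow> p \<in> cell C \<Longrightarrow> cd C (s2 C t) = dm C (s2 C p) \<Longrightarrow> hc C p t \<in> cell C"
  and s2_hc [simp]: "t \<in> cell C \<Longrightarrow> p \<in> cell C \<Longrightarrow> cd C (s2 C t) = dm C (s2 C p) \<Longrightarrow>
      s2 C (hc C p t) = cmp C (s2 C p) (s2 C t)"
  and t2_hc [simp]: "t \<in> cell C \<Longrightarrow> p \<in> cell C \<Longrightarrow> cd C (s2 C t) = dm C (s2 C p) \<Longrightarrow>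
      t2 C (hc C p t) = cmp C (t2 C p) (t2 C t)"
  using two_category unfolding two_category_def by - (elim conjE, blast)+

lemma hc_id2: "f \<in> arr C \<Longrightarrow> g \<in> arr C \<Longrightarrow> cd C f = dm C g \<Longrightarrow> hc C (id2 C g) (id2 C f) = id2 C (cmp C g f)"
  using two_category unfolding two_category_def by (elim conjE) blast

lemma hc_assoc:
  "\<lbrakk>t \<in> cell C; p \<in> cell C; q \<in> cell C; cd C (s2 C t) = dm C (s2 C p); cd C (s2 C p) = dm C (s2 C q)\<rbrakk> \<Longrightarrow>
    hc C q (hc C p t) = hc C (hc C q p) t"
  using two_category unfolding two_category_def by (elim conjE) metis

lemma interchange:
  "\<lbrakk>t1 \<in> cell C; t2' \<in> cell C; p1 \<in> cell C; p2 \<in> cell C;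
    t2 C t1 = s2 C t2'; t2 C p1 = s2 C p2; cd C (s2 C t1) = dm C (s2 C p1)\<rbrakk> \<Longrightarrow>
    vc C (hc C p2 t2') (hc C p1 t1) = hc C (vc C p2 p1) (vc C t2' t1)"
  using two_category unfolding two_category_def by (elim conjE) metis

lemma whisker_right_vc:
  assumes "t \<in> cell C" "p \<in> cell C" "t2 C t = s2 C p" "x \<in> arr C" "cd C x = dm C (s2 C t)"
  shows "hc C (vc C p t) (id2 C x) = vc C (hc C p (id2 C x)) (hc C t (id2 C x))"
  using interchange[of "id2 C x" "id2 C x" t p] assms by simp

lemma whisker_left_vc:
  assumes "t \<in> cell C" "p \<in> cell C" "t2 C t = s2 C p" "y \<in> arr C" "cd C (s2 C t) = dm C y"
  shows "hc C (id2 C y) (vc C p t) = vc C (hc C (id2 C y) p) (hc C (id2 C y) t)"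
  using interchange[of t p "id2 C y" "id2 C y"] assms by simp

lemma inv2_id2: "f \<in> arr C \<Longrightarrow> inv2 C (id2 C f)"
  unfolding inv2_def by (intro conjI bexI[of _ "id2 C f"]) auto

end

lemma two_functorD:
  assumes "two_functor C D F"
  shows "x \<in> obj C \<Longrightarrow> fo F x \<in> obj D"
    and "f \<in> arr C \<Longrightarrow> fa F f \<in> arr D"
    and "f \<in> arr C \<Longrightarrow> dm D (fa F f) = fo F (dm C f)"
    and "f \<in> arr C \<Longrightarrow> cd D (fa F f) = fo F (cd C f)"
    and "t \<in> cell C \<Longrightarrow> fc F t \<in> cell D"
    and "t \<in> cell C \<Longrightarrow> s2 D (fc F t) = fa F (s2 C t)"
    and "t \<in> cell C \<Longrightarrow> t2 D (fc F t) = fa F (t2 C t)"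
    and "x \<in> obj C \<Longrightarrow> fa F (idn C x) = idn D (fo F x)"
    and "f \<in> arr C \<Longrightarrow> g \<in> arr C \<Longrightarrow> cd C f = dm C g \<Longrightarrow> fa F (cmp C g f) = cmp D (fa F g) (fa F f)"
    and "f \<in> arr C \<Longrightarrow> fc F (id2 C f) = id2 D (fa F f)"
    and "t \<in> cell C \<Longrightarrow> p \<in> cell C \<Longrightarrow> t2 C t = s2 C p \<Longrightarrow> fc F (vc C p t) = vc D (fc F p) (fc F t)"
    and "t \<in> cell C \<Longrightarrow> p \<in> cell C \<Longrightarrow> cd C (s2 C t) = dm C (s2 C p) \<Longrightarrow>
      fc F (hc C p t) = hc D (fc F p) (fc F t)"
  using assms unfolding two_functor_def by blast+

lemma two_naturalD:
  assumes "two_natural C D F G \<eta>"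
  shows "x \<in> obj C \<Longrightarrow> hom1 D (\<eta> x) (fo F x) (fo G x)"
    and "f \<in> arr C \<Longrightarrow> cmp D (fa G f) (\<eta> (dm C f)) = cmp D (\<eta> (cd C f)) (fa F f)"
    and "t \<in> cell C \<Longrightarrow> hc D (fc G t) (id2 D (\<eta> (dm C (s2 C t)))) =
      hc D (id2 D (\<eta> (cd C (s2 C t)))) (fc F t)"
  using assms unfolding two_natural_def by blast+

locale enhanced_fs = two_cat D
  for D :: "('p, 'c, 'd) cat2" +
  fixes E M :: "'c set"
  assumes efs: "enhanced_factorization_system D E M"
begin

lemma E_arr: "E \<subseteq> arr D"
  and M_arr: "M \<subseteq> arr D"
  and factorization_exists: "a \<in> arr D \<Longrightarrow> \<exists>e\<in>E. \<exists>m\<in>M. cd D e = dm D m \<and> a = cmp D m e"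
  using efs unfolding enhanced_factorization_system_def by - (elim conjE, blast)+

lemma ex1_lifting:
  assumes "e \<in> E" "m \<in> M" "hom1 D e X X'" "hom1 D m Y Y'" "hom1 D a X Y" "hom1 D a' X' Y'"
    and "hom2 D \<Psi> (cmp D a' e) (cmp D m a)" "inv2 D \<Psi>"
  shows "\<exists>!p. hom1 D (fst p) X' Y \<and> hom2 D (snd p) a' (cmp D m (fst p)) \<and> inv2 D (snd p) \<and>
      cmp D (fst p) e = a \<and> hc D (snd p) (id2 D e) = \<Psi>"
  using efs assms unfolding enhanced_factorization_system_def by (elim conjE) blast

lemma lifting_of_identity:
  assumes "e \<in> E" "m \<in> M" "hom1 D e X X'" "hom1 D m Y Y'" "hom1 D a X Y" "hom1 D a' X' Y'"
    and "hom2 D \<Psi> (cmp D a' e) (cmp D m a)" "inv2 D \<Psi>" "\<Psi> = id2 D (cmp D a' e)"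
    and "hom1 D d X' Y" "hom2 D \<Psi>' a' (cmp D m d)" "inv2 D \<Psi>'"
    and "cmp D d e = a" "hc D \<Psi>' (id2 D e) = \<Psi>"
  shows "cmp D m d = a' \<and> \<Psi>' = id2 D a'"
  using efs assms unfolding enhanced_factorization_system_def by (elim conjE) blast

text \<open>Apply (ii) to the identity 2-cell: its last clause makes the lower triangle commute
  strictly, and every strict diagonal d yields the lifting (d, id), so uniqueness of liftings
  gives uniqueness of d.\<close>

lemma ex1_diagonal:
  assumes "e \<in> E" "m \<in> M" "hom1 D e X X'" "hom1 D m Y Y'" "hom1 D a X Y" "hom1 D a' X' Y'"
    and square: "cmp D a' e = cmp D m a"
  shows "\<exists>!d. hom1 D d X' Y \<and> cmp D d e = a \<and> cmp D m d = a'"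
proof -
  have arrs: "e \<in> arr D" "a' \<in> arr D" "cd D e = dm D a'"
    using assms(3,6) unfolding hom1_def by auto
  have a'e: "cmp D a' e \<in> arr D"
    using arrs by simp
  have id_square: "hom2 D (id2 D (cmp D a' e)) (cmp D a' e) (cmp D m a)"
    using arrs unfolding hom2_def square[symmetric] by simp
  let ?lift = "\<lambda>p. hom1 D (fst p) X' Y \<and> hom2 D (snd p) a' (cmp D m (fst p)) \<and> inv2 D (snd p) \<and>
      cmp D (fst p) e = a \<and> hc D (snd p) (id2 D e) = id2 D (cmp D a' e)"
  have ex1: "\<exists>!p. ?lift p"
    using ex1_lifting[OF assms(1-6) id_square inv2_id2[OF a'e]] .
  have strict_lift: "?lift (d, id2 D a')" if "hom1 D d X' Y" "cmp D d e = a" "cmp D m d = a'" for d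
    using that arrs unfolding hom2_def by (auto simp: inv2_id2 hc_id2)
  obtain p where p: "?lift p" using ex1 by blast
  then have "cmp D m (fst p) = a'"
    using lifting_of_identity[OF assms(1-6) id_square inv2_id2[OF a'e] refl] by blast
  with p have diagonal: "hom1 D (fst p) X' Y \<and> cmp D (fst p) e = a \<and> cmp D m (fst p) = a'"
    by blast
  show ?thesis
  proof (rule ex1I[of _ "fst p"])
    fix d assume "hom1 D d X' Y \<and> cmp D d e = a \<and> cmp D m d = a'"
    with ex1 strict_lift diagonal have "(d, id2 D a') = (fst p, id2 D a')"
      by (metis fst_conv snd_conv)
    then show "d = fst p" by simp
  qed (fact diagonal)
qed

lemma ex1_diagonal_2cell:
  assumes "e \<in> E" "m \<in> M" "hom1 D e X X'" "hom1 D m Y Y'"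
    and "hom1 D a X Y" "hom1 D b X Y" "hom1 D a' X' Y'" "hom1 D b' X' Y'"
    and "cmp D a' e = cmp D m a" "cmp D b' e = cmp D m b"
    and "hom2 D \<Phi> a b" "hom2 D \<Phi>' a' b'" "hc D (id2 D m) \<Phi> = hc D \<Phi>' (id2 D e)"
    and "hom1 D d X' Y" "cmp D d e = a" "cmp D m d = a'"
    and "hom1 D d' X' Y" "cmp D d' e = b" "cmp D m d' = b'"
  shows "\<exists>!\<Delta>. hom2 D \<Delta> d d' \<and> hc D \<Delta> (id2 D e) = \<Phi> \<and> hc D (id2 D m) \<Delta> = \<Phi>'"
  using efs[unfolded enhanced_factorization_system_def, THEN conjunct2, THEN conjunct2, THEN conjunct2,
      THEN conjunct2, THEN conjunct2, THEN conjunct2, rule_format, OF assms] .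

end

locale pointwise_factorization =
  C: two_cat C + D: enhanced_fs D E M
  for C :: "('o, 'a, 'b) cat2" and D :: "('p, 'c, 'd) cat2" and E M :: "'c set" +
  fixes F G :: "('o, 'a, 'b, 'p, 'c, 'd) fun2" and \<alpha> e m :: "'o \<Rightarrow> 'c"
  assumes F: "two_functor C D F" and G: "two_functor C D G"
    and \<alpha>: "two_natural C D F G \<alpha>"
    and e_in_E: "c \<in> obj C \<Longrightarrow> e c \<in> E"
    and m_in_M: "c \<in> obj C \<Longrightarrow> m c \<in> M"
    and composable: "c \<in> obj C \<Longrightarrow> cd D (e c) = dm D (m c)"
    and factors: "c \<in> obj C \<Longrightarrow> \<alpha> c = cmp D (m c) (e c)"
begin

lemmas F_typing [simp] = two_functorD(1-7)[OF F]
  and G_typing [simp] = two_functorD(1-7)[OF G]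

definition I_obj :: "'o \<Rightarrow> 'p" where
  "I_obj c = cd D (e c)"

lemma e_arr [simp]: "c \<in> obj C \<Longrightarrow> e c \<in> arr D"
  and m_arr [simp]: "c \<in> obj C \<Longrightarrow> m c \<in> arr D"
  using e_in_E m_in_M D.E_arr D.M_arr by blast+

lemma cd_e [simp]: "c \<in> obj C \<Longrightarrow> cd D (e c) = I_obj c"
  and dm_m [simp]: "c \<in> obj C \<Longrightarrow> dm D (m c) = I_obj c"
  using composable unfolding I_obj_def by simp_all

lemma dm_e [simp]: "c \<in> obj C \<Longrightarrow> dm D (e c) = fo F c"
  and cd_m [simp]: "c \<in> obj C \<Longrightarrow> cd D (m c) = fo G c"
  using two_naturalD(1)[OF \<alpha>] factors unfolding hom1_def by (metis D.dm_cmp D.cd_cmp e_arr m_arr dm_m cd_e)+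

lemma I_obj_obj [simp]: "c \<in> obj C \<Longrightarrow> I_obj c \<in> obj D"
  using D.arr_cd[OF e_arr] by simp

lemma factored_naturality:
  assumes f: "f \<in> arr C"
  shows "cmp D (cmp D (fa G f) (m (dm C f))) (e (dm C f)) = cmp D (m (cd C f)) (cmp D (e (cd C f)) (fa F f))"
proof -
  have "cmp D (cmp D (fa G f) (m (dm C f))) (e (dm C f)) = cmp D (fa G f) (\<alpha> (dm C f))"
    using f by (simp add: D.cmp_assoc factors)
  also have "\<dots> = cmp D (\<alpha> (cd C f)) (fa F f)"
    using f by (rule two_naturalD(2)[OF \<alpha>])
  also have "\<dots> = cmp D (m (cd C f)) (cmp D (e (cd C f)) (fa F f))"
    using f by (simp add: D.cmp_assoc factors)
  finally show ?thesis .
qed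

definition arr_filler :: "'a \<Rightarrow> 'c \<Rightarrow> bool" where
  "arr_filler f d \<longleftrightarrow> hom1 D d (I_obj (dm C f)) (I_obj (cd C f)) \<and>
    cmp D d (e (dm C f)) = cmp D (e (cd C f)) (fa F f) \<and>
    cmp D (m (cd C f)) d = cmp D (fa G f) (m (dm C f))"

lemma ex1_arr_filler: "f \<in> arr C \<Longrightarrow> \<exists>!d. arr_filler f d"
  unfolding arr_filler_def
  by (rule D.ex1_diagonal[OF e_in_E m_in_M _ _ _ _ factored_naturality]) (simp_all add: hom1_def)

definition I_arr :: "'a \<Rightarrow> 'c" where
  "I_arr f = (THE d. arr_filler f d)"

lemma arr_filler_I_arr: "f \<in> arr C \<Longrightarrow> arr_filler f (I_arr f)"
  unfolding I_arr_def by (rule theI') (rule ex1_arr_filler)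

lemma I_arr_eqI: "f \<in> arr C \<Longrightarrow> arr_filler f d \<Longrightarrow> I_arr f = d"
  unfolding I_arr_def by (rule the1_equality) (rule ex1_arr_filler)

lemma I_arr_arr [simp]: "f \<in> arr C \<Longrightarrow> I_arr f \<in> arr D"
  and dm_I_arr [simp]: "f \<in> arr C \<Longrightarrow> dm D (I_arr f) = I_obj (dm C f)"
  and cd_I_arr [simp]: "f \<in> arr C \<Longrightarrow> cd D (I_arr f) = I_obj (cd C f)"
  and I_arr_e: "f \<in> arr C \<Longrightarrow> cmp D (I_arr f) (e (dm C f)) = cmp D (e (cd C f)) (fa F f)"
  and m_I_arr: "f \<in> arr C \<Longrightarrow> cmp D (m (cd C f)) (I_arr f) = cmp D (fa G f) (m (dm C f))"
  using arr_filler_I_arr unfolding arr_filler_def hom1_def by blast+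

lemma factored_2cell_naturality:
  assumes t: "t \<in> cell C"
  defines "x \<equiv> dm C (s2 C t)" and "y \<equiv> cd C (s2 C t)"
  shows "hc D (id2 D (m y)) (hc D (id2 D (e y)) (fc F t)) = hc D (hc D (fc G t) (id2 D (m x))) (id2 D (e x))"
proof -
  have "hc D (id2 D (m y)) (hc D (id2 D (e y)) (fc F t)) = hc D (id2 D (\<alpha> y)) (fc F t)"
    using t by (simp add: D.hc_assoc D.hc_id2 factors x_def y_def)
  also have "\<dots> = hc D (fc G t) (id2 D (\<alpha> x))"
    using two_naturalD(3)[OF \<alpha> t] unfolding x_def y_def by simp
  also have "\<dots> = hc D (hc D (fc G t) (id2 D (m x))) (id2 D (e x))"
    using t by (simp add: D.hc_assoc[symmetric] D.hc_id2 factors x_def y_def)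
  finally show ?thesis .
qed

definition cell_filler :: "'b \<Rightarrow> 'd \<Rightarrow> bool" where
  "cell_filler t \<delta> \<longleftrightarrow> hom2 D \<delta> (I_arr (s2 C t)) (I_arr (t2 C t)) \<and>
    hc D \<delta> (id2 D (e (dm C (s2 C t)))) = hc D (id2 D (e (cd C (s2 C t)))) (fc F t) \<and>
    hc D (id2 D (m (cd C (s2 C t)))) \<delta> = hc D (fc G t) (id2 D (m (dm C (s2 C t))))"

lemma ex1_cell_filler:
  assumes t: "t \<in> cell C"
  shows "\<exists>!\<delta>. cell_filler t \<delta>"
proof -
  let ?x = "dm C (s2 C t)" and ?y = "cd C (s2 C t)"
  have "\<exists>!\<delta>. hom2 D \<delta> (I_arr (s2 C t)) (I_arr (t2 C t)) \<and>
      hc D \<delta> (id2 D (e ?x)) = hc D (id2 D (e ?y)) (fc F t) \<and>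
      hc D (id2 D (m ?y)) \<delta> = hc D (fc G t) (id2 D (m ?x))"
  proof (rule D.ex1_diagonal_2cell[OF e_in_E m_in_M, where
        a = "cmp D (e ?y) (fa F (s2 C t))" and b = "cmp D (e ?y) (fa F (t2 C t))" and
        a' = "cmp D (fa G (s2 C t)) (m ?x)" and b' = "cmp D (fa G (t2 C t)) (m ?x)"])
    show "hc D (id2 D (m ?y)) (hc D (id2 D (e ?y)) (fc F t)) = hc D (hc D (fc G t) (id2 D (m ?x))) (id2 D (e ?x))"
      using factored_2cell_naturality[OF t] .
  qed (use t factored_naturality[of "s2 C t"] factored_naturality[of "t2 C t"]
      I_arr_e[of "s2 C t"] m_I_arr[of "s2 C t"] I_arr_e[of "t2 C t"] m_I_arr[of "t2 C t"]
      in \<open>simp_all add: hom1_def hom2_def\<close>)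
  then show ?thesis
    unfolding cell_filler_def .
qed

definition I_cell :: "'b \<Rightarrow> 'd" where
  "I_cell t = (THE \<delta>. cell_filler t \<delta>)"

lemma cell_filler_I_cell: "t \<in> cell C \<Longrightarrow> cell_filler t (I_cell t)"
  unfolding I_cell_def by (rule theI') (rule ex1_cell_filler)

lemma I_cell_eqI: "t \<in> cell C \<Longrightarrow> cell_filler t \<delta> \<Longrightarrow> I_cell t = \<delta>"
  unfolding I_cell_def by (rule the1_equality) (rule ex1_cell_filler)

lemma I_cell_cell [simp]: "t \<in> cell C \<Longrightarrow> I_cell t \<in> cell D"
  and s2_I_cell [simp]: "t \<in> cell C \<Longrightarrow> s2 D (I_cell t) = I_arr (s2 C t)"
  and t2_I_cell [simp]: "t \<in> cell C \<Longrightarrow> t2 D (I_cell t) = I_arr (t2 C t)"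
  and I_cell_e: "t \<in> cell C \<Longrightarrow>
    hc D (I_cell t) (id2 D (e (dm C (s2 C t)))) = hc D (id2 D (e (cd C (s2 C t)))) (fc F t)"
  and m_I_cell: "t \<in> cell C \<Longrightarrow>
    hc D (id2 D (m (cd C (s2 C t)))) (I_cell t) = hc D (fc G t) (id2 D (m (dm C (s2 C t))))"
  using cell_filler_I_cell unfolding cell_filler_def hom2_def by blast+

lemma I_arr_idn:
  assumes x: "x \<in> obj C"
  shows "I_arr (idn C x) = idn D (I_obj x)"
  by (rule I_arr_eqI)
    (use x in \<open>simp_all add: arr_filler_def hom1_def two_functorD(8)[OF F] two_functorD(8)[OF G]\<close>)

lemma I_arr_cmp:
  assumes f: "f \<in> arr C" and g: "g \<in> arr C" and fg: "cd C f = dm C g"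
  shows "I_arr (cmp C g f) = cmp D (I_arr g) (I_arr f)"
proof (rule I_arr_eqI)
  have "cmp D (cmp D (I_arr g) (I_arr f)) (e (dm C f)) = cmp D (I_arr g) (cmp D (I_arr f) (e (dm C f)))"
    using f g fg by (simp add: D.cmp_assoc)
  also have "\<dots> = cmp D (cmp D (I_arr g) (e (dm C g))) (fa F f)"
    using f g fg I_arr_e[OF f] by (simp add: D.cmp_assoc)
  also have "\<dots> = cmp D (e (cd C g)) (cmp D (fa F g) (fa F f))"
    using f g fg I_arr_e[OF g] by (simp add: D.cmp_assoc)
  finally have comm_e: "cmp D (cmp D (I_arr g) (I_arr f)) (e (dm C f)) = cmp D (e (cd C g)) (fa F (cmp C g f))"
    using f g fg by (simp add: two_functorD(9)[OF F])
  have "cmp D (m (cd C g)) (cmp D (I_arr g) (I_arr f)) = cmp D (cmp D (m (cd C g)) (I_arr g)) (I_arr f)"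
    using f g fg by (simp add: D.cmp_assoc)
  also have "\<dots> = cmp D (fa G g) (cmp D (m (dm C g)) (I_arr f))"
    using f g fg m_I_arr[OF g] by (simp add: D.cmp_assoc)
  also have "\<dots> = cmp D (cmp D (fa G g) (fa G f)) (m (dm C f))"
    using f g fg m_I_arr[OF f] by (simp add: D.cmp_assoc)
  finally have comm_m: "cmp D (m (cd C g)) (cmp D (I_arr g) (I_arr f)) = cmp D (fa G (cmp C g f)) (m (dm C f))"
    using f g fg by (simp add: two_functorD(9)[OF G])
  show "arr_filler (cmp C g f) (cmp D (I_arr g) (I_arr f))"
    using f g fg comm_e comm_m by (simp add: arr_filler_def hom1_def)
qed (use f g fg in simp)

lemma I_cell_id2:
  assumes f: "f \<in> arr C"
  shows "I_cell (id2 C f) = id2 D (I_arr f)"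
  by (rule I_cell_eqI)
    (use f in \<open>simp_all add: cell_filler_def hom2_def D.hc_id2 I_arr_e m_I_arr
      two_functorD(10)[OF F] two_functorD(10)[OF G]\<close>)

lemma I_cell_vc:
  assumes t: "t \<in> cell C" and p: "p \<in> cell C" and tp: "t2 C t = s2 C p"
  shows "I_cell (vc C p t) = vc D (I_cell p) (I_cell t)"
proof (rule I_cell_eqI)
  let ?x = "dm C (s2 C t)" and ?y = "cd C (s2 C t)"
  have same_ends: "dm C (s2 C p) = ?x" "cd C (s2 C p) = ?y"
    using t p tp by (metis C.dm_t2 C.cd_t2)+
  have "hc D (vc D (I_cell p) (I_cell t)) (id2 D (e ?x)) =
      vc D (hc D (I_cell p) (id2 D (e ?x))) (hc D (I_cell t) (id2 D (e ?x)))"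
    using t p tp by (simp add: D.whisker_right_vc)
  also have "\<dots> = vc D (hc D (id2 D (e ?y)) (fc F p)) (hc D (id2 D (e ?y)) (fc F t))"
    using I_cell_e[OF t] I_cell_e[OF p] same_ends by simp
  also have "\<dots> = hc D (id2 D (e ?y)) (fc F (vc C p t))"
    using t p tp by (simp add: D.whisker_left_vc two_functorD(11)[OF F])
  finally have comm_e: "hc D (vc D (I_cell p) (I_cell t)) (id2 D (e ?x)) = hc D (id2 D (e ?y)) (fc F (vc C p t))" .
  have "hc D (id2 D (m ?y)) (vc D (I_cell p) (I_cell t)) =
      vc D (hc D (id2 D (m ?y)) (I_cell p)) (hc D (id2 D (m ?y)) (I_cell t))"
    using t p tp by (simp add: D.whisker_left_vc)
  also have "\<dots> = vc D (hc D (fc G p) (id2 D (m ?x))) (hc D (fc G t) (id2 D (m ?x)))"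
    using m_I_cell[OF t] m_I_cell[OF p] same_ends by simp
  also have "\<dots> = hc D (fc G (vc C p t)) (id2 D (m ?x))"
    using t p tp by (simp add: D.whisker_right_vc two_functorD(11)[OF G])
  finally have comm_m: "hc D (id2 D (m ?y)) (vc D (I_cell p) (I_cell t)) = hc D (fc G (vc C p t)) (id2 D (m ?x))" .
  show "cell_filler (vc C p t) (vc D (I_cell p) (I_cell t))"
    using t p tp comm_e comm_m by (simp add: cell_filler_def hom2_def)
qed (use t p tp in simp)

lemma I_cell_hc:
  assumes t: "t \<in> cell C" and p: "p \<in> cell C" and tp: "cd C (s2 C t) = dm C (s2 C p)"
  shows "I_cell (hc C p t) = hc D (I_cell p) (I_cell t)"
proof (rule I_cell_eqI)
  let ?x = "dm C (s2 C t)" and ?y = "dm C (s2 C p)" and ?z = "cd C (s2 C p)"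
  have "hc D (hc D (I_cell p) (I_cell t)) (id2 D (e ?x)) = hc D (I_cell p) (hc D (id2 D (e ?y)) (fc F t))"
    using t p tp I_cell_e[OF t] by (simp add: D.hc_assoc[symmetric])
  also have "\<dots> = hc D (hc D (id2 D (e ?z)) (fc F p)) (fc F t)"
    using t p tp I_cell_e[OF p] by (simp add: D.hc_assoc)
  also have "\<dots> = hc D (id2 D (e ?z)) (fc F (hc C p t))"
    using t p tp by (simp add: D.hc_assoc two_functorD(12)[OF F])
  finally have comm_e: "hc D (hc D (I_cell p) (I_cell t)) (id2 D (e ?x)) = hc D (id2 D (e ?z)) (fc F (hc C p t))" .
  have "hc D (id2 D (m ?z)) (hc D (I_cell p) (I_cell t)) = hc D (hc D (fc G p) (id2 D (m ?y))) (I_cell t)"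
    using t p tp m_I_cell[OF p] by (simp add: D.hc_assoc)
  also have "\<dots> = hc D (fc G p) (hc D (fc G t) (id2 D (m ?x)))"
    using t p tp m_I_cell[OF t] by (simp add: D.hc_assoc[symmetric])
  also have "\<dots> = hc D (fc G (hc C p t)) (id2 D (m ?x))"
    using t p tp by (simp add: D.hc_assoc two_functorD(12)[OF G])
  finally have comm_m: "hc D (id2 D (m ?z)) (hc D (I_cell p) (I_cell t)) = hc D (fc G (hc C p t)) (id2 D (m ?x))" .
  show "cell_filler (hc C p t) (hc D (I_cell p) (I_cell t))"
    using t p tp comm_e comm_m by (simp add: cell_filler_def hom2_def I_arr_cmp)
qed (use t p tp in simp)

definition I :: "('o, 'a, 'b, 'p, 'c, 'd) fun2" where
  "I = \<lparr>fo = I_obj, fa = I_arr, fc = I_cell\<rparr>"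

lemma two_functor_I: "two_functor C D I"
  unfolding two_functor_def I_def
  by (simp add: I_arr_idn I_arr_cmp I_cell_id2 I_cell_vc I_cell_hc)

lemma two_natural_e: "two_natural C D F I e"
  unfolding two_natural_def I_def by (simp add: hom1_def I_arr_e I_cell_e)

lemma two_natural_m: "two_natural C D I G m"
  unfolding two_natural_def I_def by (simp add: hom1_def m_I_arr m_I_cell)

end

theorem proposition1p9:
  fixes C :: "('o, 'a, 'b) cat2" and D :: "('p, 'c, 'd) cat2"
    and E M :: "'c set"
    and F G :: "('o, 'a, 'b, 'p, 'c, 'd) fun2" and \<alpha> :: "'o \<Rightarrow> 'c"
  assumes "two_category C" and "two_category D"
    and "enhanced_factorization_system D E M"
    and "two_functor C D F" and "two_functor C D G"
    and "two_natural C D F G \<alpha>"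
  shows "\<exists>I \<epsilon> \<mu>. two_functor C D I \<and> two_natural C D F I \<epsilon> \<and> two_natural C D I G \<mu> \<and>
           (\<forall>c\<in>obj C. \<alpha> c = cmp D (\<mu> c) (\<epsilon> c) \<and> \<epsilon> c \<in> E \<and> \<mu> c \<in> M)"
proof -
  interpret D: enhanced_fs D E M
    using assms(2,3) by unfold_locales
  have "\<exists>e m. e \<in> E \<and> m \<in> M \<and> cd D e = dm D m \<and> \<alpha> c = cmp D m e" if "c \<in> obj C" for c
    using D.factorization_exists two_naturalD(1)[OF assms(6) that] unfolding hom1_def by blast
  then obtain e m where fac: "\<And>c. c \<in> obj C \<Longrightarrow>
      e c \<in> E \<and> m c \<in> M \<and> cd D (e c) = dm D (m c) \<and> \<alpha> c = cmp D (m c) (e c)"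
    by metis
  interpret pointwise_factorization C D E M F G \<alpha> e m
    by unfold_locales (use assms fac in auto)
  show ?thesis
    using two_functor_I two_natural_e two_natural_m factors e_in_E m_in_M by blast
qed

end
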